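(* Assume (L): for any $\delta,\varepsilon>0$ and compact $K\subset E$ there are $N>0$, $p>0$ such that for all $n\ge N$ and $x\in K$, $\mathbb P^x\{|\frac1{n\delta}\int_0^{n\delta}f(X_s)ds-\mu(f)|>\varepsilon\}\le e^{-pn\delta}$. Then for any $\varepsilon>0$ and compact $K\subset E$ there are $S>0$, $C>0$, $\rho>0$ such that for all $t\ge S$ and $x\in K$, $$\mathbb P^x\Big\{\sup_{s\ge t}\Big|\frac1s\int_0^sf(X_u)du-\mu(f)\Big|>\varepsilon\Big\}\le Ce^{-\rho t}.$$
   Context: $E$ is a locally compact separable metric space in which every closed ball is compact. $(X_t)$ is a right-continuous time-homogeneous (standard) Markov process on $E$ with laws $\mathbb P^x$, satisfying the weak Feller property and ergodicity (a unique probability measure $\mu$ with $\|P_t(x,\cdot)-\mu\|_{TV}\to0$ for all $x$, $P_t(x,\cdot)$ the transition probabilities); $\mu(f)=\int f\,d\mu$. $f:E\to\mathbb R$ is continuous and bounded. *)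

theory Defs
  imports "HOL-Probability.Probability"
begin

definition trans_prob :: "('e::metric_space \<Rightarrow> 'w measure) \<Rightarrow> ('w \<Rightarrow> real \<Rightarrow> 'e) \<Rightarrow> 'e \<Rightarrow> real \<Rightarrow> 'e measure"
  where "trans_prob P X y t = distr (P y) borel (\<lambda>\<omega>. X \<omega> t)"

definition nat_filtration :: "'w measure \<Rightarrow> ('w \<Rightarrow> real \<Rightarrow> 'e::metric_space) \<Rightarrow> real \<Rightarrow> 'w measure"
  where "nat_filtration M X t =
     sigma (space M) (\<Union>u\<in>{0..t}. {(\<lambda>\<omega>. X \<omega> u) -` B \<inter> space M | B. B \<in> sets borel})"

definition tv_dist :: "'e::metric_space measure \<Rightarrow> 'e measure \<Rightarrow> real"
  where "tv_dist M N = (SUP A\<in>sets (borel::'e measure). \<bar>measure M A - measure N A\<bar>)"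

definition rc_markov_process :: "'w measure \<Rightarrow> ('e::metric_space \<Rightarrow> 'w measure) \<Rightarrow> ('w \<Rightarrow> real \<Rightarrow> 'e) \<Rightarrow> bool"
  where "rc_markov_process M P X \<longleftrightarrow>
     (\<forall>x. prob_space (P x) \<and> sets (P x) = sets M \<and> space (P x) = space M) \<and>
     (\<forall>t\<ge>0. (\<lambda>\<omega>. X \<omega> t) \<in> measurable M borel) \<and>
     (\<forall>\<omega>\<in>space M. \<forall>t\<ge>0. continuous (at_right t) (X \<omega>)) \<and>
     (\<forall>x. AE \<omega> in P x. X \<omega> 0 = x) \<and>
     (\<forall>t\<ge>0. \<forall>A\<in>sets borel. (\<lambda>y. measure (trans_prob P X y t) A) \<in> borel_measurable borel) \<and>
     (\<forall>x s t (g::'e \<Rightarrow> real). s \<ge> 0 \<longrightarrow> t \<ge> 0 \<longrightarrow> g \<in> borel_measurable borel \<longrightarrow> bounded (range g) \<longrightarrow>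
        (\<forall>A\<in>sets (nat_filtration M X t).
           (\<integral>\<omega>. indicator A \<omega> * g (X \<omega> (t + s)) \<partial>P x) =
           (\<integral>\<omega>. indicator A \<omega> * (\<integral>y. g y \<partial>trans_prob P X (X \<omega> t) s) \<partial>P x)))"

definition weak_feller :: "('e::metric_space \<Rightarrow> 'w measure) \<Rightarrow> ('w \<Rightarrow> real \<Rightarrow> 'e) \<Rightarrow> bool"
  where "weak_feller P X \<longleftrightarrow>
     (\<forall>t\<ge>0. \<forall>g::'e \<Rightarrow> real. continuous_on UNIV g \<longrightarrow> bounded (range g) \<longrightarrow>
        continuous_on UNIV (\<lambda>y. \<integral>z. g z \<partial>trans_prob P X y t))"

definition tv_limit_measure :: "('e::metric_space \<Rightarrow> 'w measure) \<Rightarrow> ('w \<Rightarrow> real \<Rightarrow> 'e) \<Rightarrow> 'e measure \<Rightarrow> bool"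
  where "tv_limit_measure P X \<mu> \<longleftrightarrow> prob_space \<mu> \<and> sets \<mu> = sets borel \<and>
     (\<forall>x. ((\<lambda>t. tv_dist (trans_prob P X x t) \<mu>) \<longlongrightarrow> 0) at_top)"

definition ergodic_with :: "('e::metric_space \<Rightarrow> 'w measure) \<Rightarrow> ('w \<Rightarrow> real \<Rightarrow> 'e) \<Rightarrow> 'e measure \<Rightarrow> bool"
  where "ergodic_with P X \<mu> \<longleftrightarrow> tv_limit_measure P X \<mu> \<and>
     (\<forall>\<nu>. tv_limit_measure P X \<nu> \<longrightarrow> \<nu> = \<mu>)"

definition time_avg :: "('w \<Rightarrow> real \<Rightarrow> 'e) \<Rightarrow> ('e \<Rightarrow> real) \<Rightarrow> 'w \<Rightarrow> real \<Rightarrow> real"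
  where "time_avg X f \<omega> s = (1 / s) * (LINT u:{0..s}|lborel. f (X \<omega> u))"

end

theory Submission
  imports Defs
begin

text \<open>Apply (L) with \<open>\<delta> = 1\<close> and \<open>\<epsilon>/2\<close>. Since \<open>\<bar>f\<bar> \<le> B\<close>, the time average moves by at most
  \<open>2B(s - n)/s\<close> between \<open>n = \<lfloor>s\<rfloor>\<close> and \<open>s\<close>; so once \<open>t \<ge> 1 + 4B/\<epsilon>\<close>, a deviation larger than
  \<open>\<epsilon>\<close> at some time \<open>s \<ge> t\<close> forces a deviation larger than \<open>\<epsilon>/2\<close> at some integer time
  \<open>n \<ge> \<lfloor>t\<rfloor>\<close>. The union bound over these integer times is a geometric tail of order
  \<open>exp (- p t)\<close>.\<close>

definition interval_avg :: "(real \<Rightarrow> real) \<Rightarrow> real \<Rightarrow> real"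
  where "interval_avg h s = (1 / s) * (LINT u:{0..s}|lborel. h u)"

lemma set_integrable_bounded:
  fixes g :: "'a \<Rightarrow> real"
  assumes "g \<in> borel_measurable M" "\<And>x. \<bar>g x\<bar> \<le> B" "A \<in> sets M" "emeasure M A < \<infinity>"
  shows "set_integrable M A g"
proof (rule set_integrable_bound)
  show "set_integrable M A (\<lambda>_. B)"
    using assms(3,4) by (simp add: set_integrable_def less_top)
  show "set_borel_measurable M A g"
    using assms(1,3) by (simp add: set_borel_measurable_def)
  show "AE x in M. x \<in> A \<longrightarrow> norm (g x) \<le> norm B"
    using assms(2) order_trans[OF _ abs_ge_self] by (auto simp: abs_le_iff)
qed

lemma abs_set_integral_le_bound:
  fixes g :: "'a \<Rightarrow> real"
  assumes "g \<in> borel_measurable M" "\<And>x. \<bar>g x\<bar> \<le> B" "A \<in> sets M" "emeasure M A < \<infinity>"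
  shows "\<bar>LINT x:A|M. g x\<bar> \<le> B * measure M A"
proof -
  have "\<bar>LINT x:A|M. g x\<bar> \<le> (LINT x:A|M. \<bar>g x\<bar>)"
    using set_integral_norm_bound[OF set_integrable_bounded[OF assms]] by simp
  also have "\<dots> \<le> (LINT x:A|M. B)"
    using assms by (intro set_integral_mono set_integrable_abs set_integrable_bounded)
      (auto simp: set_integrable_def less_top)
  also have "\<dots> = B * measure M A"
    using assms(3,4) by (simp add: set_integral_const)
  finally show ?thesis .
qed

lemma abs_set_integral_Icc_diff_le:
  fixes g :: "real \<Rightarrow> real"
  assumes g: "g \<in> borel_measurable borel" and B: "\<And>u. \<bar>g u\<bar> \<le> B" and "0 \<le> a" "a \<le> b"
  shows "\<bar>(LINT u:{0..b}|lborel. g u) - (LINT u:{0..a}|lborel. g u)\<bar> \<le> B * (b - a)"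
proof -
  have gl: "g \<in> borel_measurable lborel" using g by simp
  have "{0..b} = {0..a} \<union> {a<..b}" using assms by auto
  then have "(LINT u:{0..b}|lborel. g u) = (LINT u:{0..a}|lborel. g u) + (LINT u:{a<..b}|lborel. g u)"
    by (simp only:) (intro set_integral_Un set_integrable_bounded[OF gl B], use assms in auto)
  moreover have "\<bar>LINT u:{a<..b}|lborel. g u\<bar> \<le> B * (b - a)"
    using abs_set_integral_le_bound[OF gl B, of "{a<..b}"] assms by simp
  ultimately show ?thesis by simp
qed

lemma abs_interval_avg_le:
  assumes "h \<in> borel_measurable borel" "\<And>u. \<bar>h u\<bar> \<le> B" "s > 0"
  shows "\<bar>interval_avg h s\<bar> \<le> B"
  using abs_set_integral_le_bound[of h lborel B "{0..s}"] assms
  by (simp add: interval_avg_def abs_mult divide_le_eq mult.commute)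

lemma abs_interval_avg_diff_le:
  assumes h: "h \<in> borel_measurable borel" and B: "\<And>u. \<bar>h u\<bar> \<le> B" and "0 < a" "a \<le> b"
  shows "\<bar>interval_avg h b - interval_avg h a\<bar> \<le> 2 * B * (b - a) / b"
proof -
  define Fa where "Fa = (LINT u:{0..a}|lborel. h u)"
  define Fb where "Fb = (LINT u:{0..b}|lborel. h u)"
  have "interval_avg h b - interval_avg h a = (Fb - Fa) / b - interval_avg h a * ((b - a) / b)"
    using assms(3,4) by (simp add: interval_avg_def Fa_def Fb_def field_simps)
  then have "\<bar>interval_avg h b - interval_avg h a\<bar>
      \<le> \<bar>(Fb - Fa) / b\<bar> + \<bar>interval_avg h a * ((b - a) / b)\<bar>"
    by (simp only: abs_triangle_ineq4)
  also have "\<dots> \<le> B * (b - a) / b + B * ((b - a) / b)"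
  proof (rule add_mono)
    show "\<bar>(Fb - Fa) / b\<bar> \<le> B * (b - a) / b"
      using abs_set_integral_Icc_diff_le[OF h B, of a b] assms(3,4)
      unfolding Fa_def Fb_def by (simp add: divide_right_mono)
    show "\<bar>interval_avg h a * ((b - a) / b)\<bar> \<le> B * ((b - a) / b)"
      using mult_right_mono[OF abs_interval_avg_le[OF h B assms(3)], of "(b - a) / b"] assms(3,4)
      by (simp add: abs_mult)
  qed
  also have "\<dots> = 2 * B * (b - a) / b"
    by (simp add: field_simps)
  finally show ?thesis .
qed

lemma interval_avg_sup_dev_imp_grid_dev:
  assumes h: "h \<in> borel_measurable borel" and B: "\<And>u. \<bar>h u\<bar> \<le> B"
    and "\<epsilon> > 0" and t: "1 \<le> t" "4 * B / \<epsilon> \<le> t"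
    and sup: "\<epsilon> < (SUP s\<in>{t..}. \<bar>interval_avg h s - m\<bar>)"
  shows "\<exists>n\<ge>nat \<lfloor>t\<rfloor>. \<epsilon> / 2 < \<bar>interval_avg h (real n) - m\<bar>"
proof -
  have B0: "0 \<le> B" using B[of 0] by linarith
  have "bdd_above ((\<lambda>s. \<bar>interval_avg h s - m\<bar>) ` {t..})"
  proof (rule bdd_aboveI2)
    fix s assume "s \<in> {t..}"
    then have "\<bar>interval_avg h s\<bar> \<le> B" using abs_interval_avg_le[OF h B] t by simp
    then show "\<bar>interval_avg h s - m\<bar> \<le> B + \<bar>m\<bar>" by linarith
  qed
  then obtain s where "t \<le> s" and dev_s: "\<epsilon> < \<bar>interval_avg h s - m\<bar>"
    using sup by (auto simp: less_cSUP_iff)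
  define n where "n = nat \<lfloor>s\<rfloor>"
  have n: "real n \<le> s" "s < real n + 1" "1 \<le> real n" "nat \<lfloor>t\<rfloor> \<le> n"
    using \<open>t \<le> s\<close> t(1) by (auto simp: n_def floor_mono nat_mono)
  have "\<bar>interval_avg h s - interval_avg h (real n)\<bar> \<le> 2 * B * (s - real n) / s"
    using abs_interval_avg_diff_le[OF h B, of "real n" s] n by simp
  also have "\<dots> \<le> 2 * B / s"
    using n B0 by (intro divide_right_mono) (auto simp: mult_left_le)
  also have "\<dots> \<le> \<epsilon> / 2"
  proof -
    have "4 * B / \<epsilon> \<le> s" using t \<open>t \<le> s\<close> by linarith
    then have "4 * B \<le> s * \<epsilon>" using \<open>\<epsilon> > 0\<close> by (simp add: pos_divide_le_eq)
    then show ?thesis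
      using t \<open>t \<le> s\<close> by (simp add: field_simps)
  qed
  finally have "\<epsilon> / 2 < \<bar>interval_avg h (real n) - m\<bar>"
    using dev_s by arith
  then show ?thesis
    using n(4) by blast
qed

lemma (in prob_space) prob_le_geometric_tail:
  assumes "p > 0" and E: "\<And>n. n \<ge> n0 \<Longrightarrow> E n \<in> events"
    and prob_E: "\<And>n. n \<ge> n0 \<Longrightarrow> prob (E n) \<le> exp (- p * real n)"
    and A: "A \<subseteq> (\<Union>n\<in>{n0..}. E n)"
  shows "prob A \<le> exp (- p * real n0) / (1 - exp (- p))"
proof -
  have q: "exp (- p) < 1" using \<open>p > 0\<close> by simp
  have exp_shift: "exp (- p * real (i + n0)) = exp (- p * real n0) * exp (- p) ^ i" for i
    by (simp add: exp_of_nat_mult[symmetric] exp_add[symmetric] algebra_simps)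
  have sums: "(\<lambda>i. exp (- p * real (i + n0))) sums (exp (- p * real n0) / (1 - exp (- p)))"
    unfolding exp_shift using sums_mult[OF geometric_sums, of "exp (- p)" "exp (- p * real n0)"] q
    by simp
  have prob_E': "prob (E (i + n0)) \<le> exp (- p * real (i + n0))" for i
    by (rule prob_E) simp
  have summable: "summable (\<lambda>i. prob (E (i + n0)))"
    by (rule summable_comparison_test[OF _ sums_summable[OF sums]]) (use prob_E' in auto)
  have "A \<subseteq> (\<Union>i. E (i + n0))"
  proof
    fix x assume "x \<in> A"
    then obtain n where "n0 \<le> n" "x \<in> E n" using A by auto
    then show "x \<in> (\<Union>i. E (i + n0))" by (intro UN_I[of "n - n0"]) auto
  qed
  then have "prob A \<le> prob (\<Union>i. E (i + n0))"
    using E by (cases "A \<in> events") (auto intro!: finite_measure_mono simp: measure_notin_sets)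
  also have "\<dots> \<le> (\<Sum>i. prob (E (i + n0)))"
    using E summable by (intro finite_measure_subadditive_countably) auto
  also have "\<dots> \<le> (\<Sum>i. exp (- p * real (i + n0)))"
    using prob_E' summable sums_summable[OF sums] by (rule suminf_le)
  also have "\<dots> = exp (- p * real n0) / (1 - exp (- p))"
    using sums by (rule sums_unique[symmetric])
  finally show ?thesis .
qed

lemma ceiling_grid_approx:
  fixes v :: real
  shows ceiling_grid_ge: "v \<le> of_int \<lceil>real (Suc k) * v\<rceil> / real (Suc k)"
    and LIMSEQ_ceiling_grid: "(\<lambda>k. of_int \<lceil>real (Suc k) * v\<rceil> / real (Suc k)) \<longlonglongrightarrow> v"
proof -
  show ge: "v \<le> of_int \<lceil>real (Suc k) * v\<rceil> / real (Suc k)" for k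
    by (simp add: pos_le_divide_eq mult.commute)
  have le: "of_int \<lceil>real (Suc k) * v\<rceil> / real (Suc k) \<le> v + inverse (real (Suc k))" for k
  proof -
    have "of_int \<lceil>real (Suc k) * v\<rceil> \<le> real (Suc k) * v + 1"
      by (rule of_int_ceiling_le_add_one)
    then show ?thesis
      by (simp add: pos_divide_le_eq algebra_simps del: of_nat_Suc)
  qed
  show "(\<lambda>k. of_int \<lceil>real (Suc k) * v\<rceil> / real (Suc k)) \<longlonglongrightarrow> v"
    by (rule tendsto_sandwich[OF _ _ tendsto_const LIMSEQ_inverse_real_of_nat_add])
      (use ge le in auto)
qed

text \<open>Clamping time at 0 extends each path to all of \<open>\<real>\<close>. Approximating times from above on the
  grid \<open>\<lceil>(k+1)v\<rceil>/(k+1)\<close> turns right-continuity into a pointwise limit of countably-valued,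
  hence jointly measurable, functions.\<close>

lemma measurable_right_continuous_process:
  fixes X :: "'w \<Rightarrow> real \<Rightarrow> 'e::metric_space"
  assumes meas: "\<And>t. t \<ge> 0 \<Longrightarrow> (\<lambda>\<omega>. X \<omega> t) \<in> measurable M borel"
    and cont: "\<And>\<omega> t. \<omega> \<in> space M \<Longrightarrow> t \<ge> 0 \<Longrightarrow> continuous (at_right t) (X \<omega>)"
  shows "(\<lambda>z. X (fst z) (max 0 (snd z))) \<in> measurable (M \<Otimes>\<^sub>M lborel) borel"
proof -
  define grid where "grid k v = of_int \<lceil>real (Suc k) * v\<rceil> / real (Suc k)" for k v
  have "(\<lambda>z. X (fst z) (max 0 (grid k (max 0 (snd z))))) \<in> measurable (M \<Otimes>\<^sub>M lborel) borel" for k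
  proof -
    have "(\<lambda>z. X (fst z) (max 0 (of_int i / real (Suc k)))) \<in> measurable (M \<Otimes>\<^sub>M lborel) borel"
      for i :: int
      using meas by measurable
    moreover have "(\<lambda>z. \<lceil>real (Suc k) * max 0 (snd z)\<rceil>) \<in> measurable (M \<Otimes>\<^sub>M lborel) (count_space UNIV)"
      by measurable
    ultimately show ?thesis
      unfolding grid_def by (rule measurable_compose_countable)
  qed
  moreover have "(\<lambda>k. X (fst z) (max 0 (grid k (max 0 (snd z))))) \<longlonglongrightarrow> X (fst z) (max 0 (snd z))"
    if "z \<in> space (M \<Otimes>\<^sub>M lborel)" for z
  proof -
    define v where "v = max 0 (snd z)"
    have "fst z \<in> space M" using that by (simp add: space_pair_measure mem_Times_iff)
    then have cont_v: "continuous (at v within {v..}) (X (fst z))"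
      using cont by (simp add: at_within_Ici_at_right v_def)
    have grid_ge: "v \<le> grid k v" for k
      unfolding grid_def by (rule ceiling_grid_ge)
    have grid_lim: "(\<lambda>k. grid k v) \<longlonglongrightarrow> v"
      unfolding grid_def by (rule LIMSEQ_ceiling_grid)
    have "(\<lambda>k. X (fst z) (grid k v)) \<longlonglongrightarrow> X (fst z) v"
      by (rule continuous_within_tendsto_compose'[OF cont_v _ grid_lim]) (simp add: grid_ge)
    moreover have "max 0 (grid k v) = grid k v" for k
      using grid_ge[of k] by (simp add: v_def)
    ultimately show ?thesis by (simp add: v_def)
  qed
  ultimately show ?thesis
    by (rule borel_measurable_LIMSEQ_metric)
qed

lemma time_avg_eq_interval_avg:
  "time_avg X f \<omega> s = interval_avg (\<lambda>u. f (X \<omega> (max 0 u))) s"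
  unfolding time_avg_def interval_avg_def
  by (intro arg_cong[where f="\<lambda>I. (1 / s) * I"] set_lebesgue_integral_cong) auto

lemma rc_markov_process_measurable_path_functional:
  assumes "rc_markov_process M P X" and "continuous_on UNIV f"
  shows "(\<lambda>z. f (X (fst z) (max 0 (snd z)))) \<in> borel_measurable (M \<Otimes>\<^sub>M lborel)"
proof (rule measurable_compose[OF measurable_right_continuous_process])
  show "f \<in> borel_measurable borel"
    using assms(2) by (rule borel_measurable_continuous_onI)
qed (use assms(1) in \<open>auto simp: rc_markov_process_def\<close>)

lemma rc_markov_process_measurable_time_avg:
  assumes "rc_markov_process M P X" and "continuous_on UNIV f"
  shows "(\<lambda>\<omega>. time_avg X f \<omega> s) \<in> borel_measurable M"
proof -
  note [measurable] = rc_markov_process_measurable_path_functional[OF assms]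
  show ?thesis
    unfolding time_avg_eq_interval_avg interval_avg_def set_lebesgue_integral_def
    by measurable
qed

lemma rc_markov_process_sup_time_avg_dev_subset:
  assumes markov: "rc_markov_process M P X" and "continuous_on UNIV f"
    and B: "\<And>y. \<bar>f y\<bar> \<le> B" and "\<epsilon> > 0" and "1 \<le> t" "4 * B / \<epsilon> \<le> t"
  shows "{\<omega>\<in>space M. \<epsilon> < (SUP s\<in>{t..}. \<bar>time_avg X f \<omega> s - m\<bar>)}
    \<subseteq> (\<Union>n\<in>{nat \<lfloor>t\<rfloor>..}. {\<omega>\<in>space M. \<epsilon> / 2 < \<bar>time_avg X f \<omega> (real n) - m\<bar>})"
proof safe
  fix \<omega> assume "\<omega> \<in> space M" and sup: "\<epsilon> < (SUP s\<in>{t..}. \<bar>time_avg X f \<omega> s - m\<bar>)"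
  have "(\<lambda>u. f (X \<omega> (max 0 u))) \<in> borel_measurable borel"
    using measurable_Pair2[OF rc_markov_process_measurable_path_functional[OF assms(1,2)] \<open>\<omega> \<in> space M\<close>]
    by simp
  from interval_avg_sup_dev_imp_grid_dev[OF this B assms(4-6)] sup
  show "\<omega> \<in> (\<Union>n\<in>{nat \<lfloor>t\<rfloor>..}. {\<omega>\<in>space M. \<epsilon> / 2 < \<bar>time_avg X f \<omega> (real n) - m\<bar>})"
    using \<open>\<omega> \<in> space M\<close> by (auto simp: time_avg_eq_interval_avg)
qed

lemma rc_markov_process_sup_time_avg_dev_bound:
  assumes markov: "rc_markov_process M P X" and f_cont: "continuous_on UNIV f"
    and B: "\<And>y. \<bar>f y\<bar> \<le> B" and "\<epsilon> > 0" and "p > 0"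
    and grid_bound: "\<And>n. N \<le> real n \<Longrightarrow>
      measure (P x) {\<omega>\<in>space (P x). \<epsilon> / 2 < \<bar>time_avg X f \<omega> (real n) - m\<bar>} \<le> exp (- p * real n)"
    and "N + 1 \<le> t" "1 + 4 * B / \<epsilon> \<le> t"
  shows "measure (P x) {\<omega>\<in>space (P x). \<epsilon> < (SUP s\<in>{t..}. \<bar>time_avg X f \<omega> s - m\<bar>)}
    \<le> exp p / (1 - exp (- p)) * exp (- p * t)"
proof -
  define E where "E n = {\<omega>\<in>space M. \<epsilon> / 2 < \<bar>time_avg X f \<omega> (real n) - m\<bar>}" for n :: nat
  interpret prob_space "P x" using markov by (simp add: rc_markov_process_def)
  have space: "space (P x) = space M" "sets (P x) = sets M"
    using markov by (simp_all add: rc_markov_process_def)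
  have "0 \<le> 4 * B / \<epsilon>" using B[of undefined] \<open>\<epsilon> > 0\<close> by simp
  then have t: "1 \<le> t" "4 * B / \<epsilon> \<le> t"
    using assms(8) by linarith+
  then have "real (nat \<lfloor>t\<rfloor>) = of_int \<lfloor>t\<rfloor>" by simp
  then have t': "N \<le> real (nat \<lfloor>t\<rfloor>)" "t - 1 \<le> real (nat \<lfloor>t\<rfloor>)"
    using assms(7) by linarith+
  have "prob {\<omega>\<in>space (P x). \<epsilon> < (SUP s\<in>{t..}. \<bar>time_avg X f \<omega> s - m\<bar>)}
      \<le> exp (- p * real (nat \<lfloor>t\<rfloor>)) / (1 - exp (- p))"
  proof (rule prob_le_geometric_tail[OF \<open>p > 0\<close>])
    show "E n \<in> events" for n
      using rc_markov_process_measurable_time_avg[OF markov f_cont] by (simp add: E_def space)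
    show "prob (E n) \<le> exp (- p * real n)" if "nat \<lfloor>t\<rfloor> \<le> n" for n
      using grid_bound[of n] t'(1) that by (simp add: E_def space)
    show "{\<omega>\<in>space (P x). \<epsilon> < (SUP s\<in>{t..}. \<bar>time_avg X f \<omega> s - m\<bar>)} \<subseteq> (\<Union>n\<in>{nat \<lfloor>t\<rfloor>..}. E n)"
      using rc_markov_process_sup_time_avg_dev_subset[OF markov f_cont B \<open>\<epsilon> > 0\<close> t(1,2)]
      by (simp add: E_def space)
  qed
  also have "\<dots> \<le> exp (- p * (t - 1)) / (1 - exp (- p))"
    using t'(2) \<open>p > 0\<close> by (intro divide_right_mono) auto
  also have "\<dots> = exp p / (1 - exp (- p)) * exp (- p * t)"
    by (simp add: algebra_simps flip: exp_add)
  finally show ?thesis .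
qed

theorem lemma2p24:
  fixes M :: "'w measure" and P :: "'e::metric_space \<Rightarrow> 'w measure"
    and X :: "'w \<Rightarrow> real \<Rightarrow> 'e" and \<mu> :: "'e measure" and f :: "'e \<Rightarrow> real"
  assumes loc_compact: "locally_compact_space (euclidean :: 'e topology)"
    and separable: "separable_space (euclidean :: 'e topology)"
    and balls_compact: "\<And>(x::'e) r. compact (cball x r)"
    and markov: "rc_markov_process M P X"
    and feller: "weak_feller P X"
    and ergodic: "ergodic_with P X \<mu>"
    and f_cont: "continuous_on UNIV f" and f_bdd: "bounded (range f)"
    and L: "\<And>\<delta> \<epsilon> K. \<delta> > 0 \<Longrightarrow> \<epsilon> > 0 \<Longrightarrow> compact K \<Longrightarrow>
              \<exists>N>0. \<exists>p>0. \<forall>n::nat. \<forall>x\<in>K. real n \<ge> N \<longrightarrow>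
                measure (P x) {\<omega>\<in>space (P x). \<bar>time_avg X f \<omega> (real n * \<delta>) - (\<integral>y. f y \<partial>\<mu>)\<bar> > \<epsilon>}
                  \<le> exp (- p * (real n * \<delta>))"
  shows "\<And>\<epsilon> K. \<epsilon> > 0 \<Longrightarrow> compact K \<Longrightarrow>
           \<exists>S>0. \<exists>C>0. \<exists>\<rho>>0. \<forall>t\<ge>S. \<forall>x\<in>K.
             measure (P x) {\<omega>\<in>space (P x).
                (SUP s\<in>{t..}. \<bar>time_avg X f \<omega> s - (\<integral>y. f y \<partial>\<mu>)\<bar>) > \<epsilon>}
               \<le> C * exp (- \<rho> * t)"
proof -
  fix \<epsilon> :: real and K :: "'e set"
  assume "\<epsilon> > 0" and "compact K"
  obtain B where B: "\<And>y. \<bar>f y\<bar> \<le> B"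
    using f_bdd by (auto simp: bounded_pos)
  obtain N p where "N > 0" "p > 0" and grid_bound: "\<And>n x. x \<in> K \<Longrightarrow> N \<le> real n \<Longrightarrow>
      measure (P x) {\<omega>\<in>space (P x). \<epsilon> / 2 < \<bar>time_avg X f \<omega> (real n) - (\<integral>y. f y \<partial>\<mu>)\<bar>}
        \<le> exp (- p * real n)"
    using L[of 1 "\<epsilon> / 2" K] \<open>\<epsilon> > 0\<close> \<open>compact K\<close> by auto
  define S where "S = max (N + 1) (1 + 4 * B / \<epsilon>)"
  have "measure (P x) {\<omega>\<in>space (P x). \<epsilon> < (SUP s\<in>{t..}. \<bar>time_avg X f \<omega> s - (\<integral>y. f y \<partial>\<mu>)\<bar>)}
      \<le> exp p / (1 - exp (- p)) * exp (- p * t)" if "S \<le> t" "x \<in> K" for t x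
    using that by (intro rc_markov_process_sup_time_avg_dev_bound[OF markov f_cont B \<open>\<epsilon> > 0\<close> \<open>p > 0\<close>
        grid_bound]) (auto simp: S_def)
  moreover have "S > 0" "exp p / (1 - exp (- p)) > 0"
    using \<open>N > 0\<close> \<open>p > 0\<close> by (auto simp: S_def)
  ultimately show "\<exists>S>0. \<exists>C>0. \<exists>\<rho>>0. \<forall>t\<ge>S. \<forall>x\<in>K. measure (P x) {\<omega>\<in>space (P x).
      (SUP s\<in>{t..}. \<bar>time_avg X f \<omega> s - (\<integral>y. f y \<partial>\<mu>)\<bar>) > \<epsilon>} \<le> C * exp (- \<rho> * t)"
    using \<open>p > 0\<close> by blast
qed

end
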